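(* Let $k_1, k_2 > 0$ and define $L:\mathbb{R}\to\mathbb{R}$ by $L(z) = k_1 z$ for $z \geq 0$ and $L(z) = -k_2 z$ for $z < 0$. Let $Z$ be a real random variable with probability density function $f$ such that $f(x) = f(-x)$ for all $x \in \mathbb{R}$, $f(x) \geq f(y)$ whenever $0 \leq x \leq y$, and $\mathbb{E}[Z^2] < \infty$. Let $C$ be a minimizer of $c \mapsto \mathbb{E}[L(Z+c)]$ over $c \in \mathbb{R}$. Then $$\mathrm{Var}[L(Z+C)] \leq \mathrm{Var}[L(Z)],$$ and equality holds only when $C = 0$, which happens exactly when $k_1 = k_2$.
   Context: $Z$ models a forecast error $\hat y - y$; $L$ is an asymmetric piecewise-linear loss. $\mathbb{E}$ and $\mathrm{Var}$ denote expectation and variance. *)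

theory Defs
  imports "HOL-Probability.Probability"
begin

definition lossL :: "real \<Rightarrow> real \<Rightarrow> real \<Rightarrow> real" where
  "lossL k1 k2 z = (if z \<ge> 0 then k1 * z else - k2 * z)"

end

theory Submission
  imports Defs
begin

(* Write F, P, Q for the distribution function cdf_Z of Z and its lower partial moments
   lpm1 t = E[(t - Z)^+] and lpm2 t = E[((t - Z)^+)^2], so that P' = F and Q' = 2 P.  With K = k1 + k2
   we have L y = k1 y + K (-y)^+ and E Z = 0, hence E L(Z + c) = k1 c + K P(-c), and a minimiser
   satisfies F(-C) = k1 / K.  Likewise Var L(Z + c) = k1^2 E Z^2 + psi(-c), where
   psi t = (K^2 - 2 k1 K) Q t - K^2 (P t)^2 + 2 k1 K t P t.
   If k1 < k2 then F(-C) < 1/2 = F 0 forces -C < 0, and F > k1 / K on (-C, 0).  There the unimodality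
   bounds 1 - 2 F z >= -2 z f z and (F z)^2 <= 2 f z P z make psi' positive, so psi(-C) < psi 0 by
   the mean value theorem.  The case k1 > k2 follows by reflecting Z; for k1 = k2 the same two bounds
   exclude F(-C) = 1/2 unless C = 0. *)

lemma has_real_derivative_quadratic_remainder:
  fixes g :: "real \<Rightarrow> real"
  assumes remainder: "\<And>h. \<bar>g (t + h) - g t - h * D\<bar> \<le> B * h\<^sup>2"
  shows "(g has_real_derivative D) (at t)"
proof -
  have "\<bar>(g (t + h) - g t) / h - D\<bar> \<le> B * \<bar>h\<bar>" if "h \<noteq> 0" for h
  proof -
    have "\<bar>(g (t + h) - g t) / h - D\<bar> = \<bar>g (t + h) - g t - h * D\<bar> / \<bar>h\<bar>"
      using that by (simp add: field_simps)
    also have "\<dots> \<le> B * \<bar>h\<bar>\<^sup>2 / \<bar>h\<bar>"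
      by (intro divide_right_mono) (simp_all add: remainder)
    also have "\<dots> = B * \<bar>h\<bar>"
      using that by (simp add: power2_eq_square del: abs_mult_self_eq)
    finally show ?thesis .
  qed
  then have "\<forall>\<^sub>F h in at 0. norm ((g (t + h) - g t) / h - D) \<le> B * \<bar>h\<bar>"
    by (auto intro: eventually_mono[OF eventually_neq_at_within[of 0]])
  then have "((\<lambda>h. (g (t + h) - g t) / h - D) \<longlongrightarrow> 0) (at 0)"
    by (rule Lim_null_comparison) (auto intro!: tendsto_eq_intros)
  then show ?thesis
    unfolding DERIV_def by (simp add: LIM_zero_iff)
qed

lemma integral_lborel_ramp:
  fixes a b :: real
  assumes "a \<le> b"
  shows "(\<integral>x. (x - a) * indicator {a..b} x \<partial>lborel) = (b - a)\<^sup>2 / 2"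
proof -
  have "(\<integral>x. indicator {a..b} x *\<^sub>R (x - a) \<partial>lborel) = (b - a)\<^sup>2 / 2 - (a - a)\<^sup>2 / 2"
    by (rule integral_FTC_atLeastAtMost[OF assms])
       (auto intro!: derivative_eq_intros continuous_intros
         simp: has_real_derivative_iff_has_vector_derivative[symmetric])
  then show ?thesis
    by (simp add: mult.commute)
qed

lemma integrable_lborel_ramp:
  fixes a b :: real
  shows "integrable lborel (\<lambda>x. (x - a) * indicator {a..b} x :: real)"
  by (rule borel_integrable_atLeastAtMost) (auto intro: continuous_intros)

lemma max0_increment_bound:
  fixes t h x :: real
  shows "\<bar>max 0 (t + h - x) - max 0 (t - x) - h * indicator {..t} x\<bar>
    \<le> \<bar>h\<bar> * indicator {t - \<bar>h\<bar>..t + \<bar>h\<bar>} x"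
  by (auto simp: indicator_def abs_if max_def)

lemma max0_square_increment_bound:
  fixes a h :: real
  shows "\<bar>(max 0 (a + h))\<^sup>2 - (max 0 a)\<^sup>2 - 2 * h * max 0 a\<bar> \<le> h\<^sup>2"
proof (cases "a \<ge> 0"; cases "a + h \<ge> 0")
  assume "a \<ge> 0" "a + h \<ge> 0"
  then show ?thesis
    by (simp add: power2_eq_square algebra_simps)
next
  assume a: "a \<ge> 0" "\<not> a + h \<ge> 0"
  then have "(a + h)\<^sup>2 \<le> h\<^sup>2"
    by (simp add: abs_le_square_iff[symmetric])
  moreover have "- a\<^sup>2 - 2 * h * a = h\<^sup>2 - (a + h)\<^sup>2"
    by (simp add: power2_eq_square algebra_simps)
  ultimately show ?thesis
    using a by (simp add: max_def)
next
  assume a: "\<not> a \<ge> 0" "a + h \<ge> 0"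
  then have "(a + h)\<^sup>2 \<le> h\<^sup>2"
    by (intro power_mono) auto
  then show ?thesis
    using a by (simp add: max_def)
qed (simp add: max_def)

lemma lossL_reflect: "lossL k2 k1 (- y) = lossL k1 k2 y"
  by (simp add: lossL_def)

lemma lossL_eq_ramp: "lossL k1 k2 y = k1 * y + (k1 + k2) * max 0 (- y)"
  by (simp add: lossL_def algebra_simps)

lemma lossL_shift_square:
  "(lossL k1 k2 (z + c))\<^sup>2 = k1\<^sup>2 * z\<^sup>2 + 2 * k1\<^sup>2 * c * z + k1\<^sup>2 * c\<^sup>2
     + ((k1 + k2)\<^sup>2 - 2 * k1 * (k1 + k2)) * (max 0 (- c - z))\<^sup>2"
  by (cases "z + c \<ge> 0") (simp_all add: lossL_def max_def power2_eq_square algebra_simps)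

lemma bathtub_ramp_bound:
  fixes d m t x y :: real
  assumes "0 \<le> y" and "x \<le> t \<Longrightarrow> y \<le> m" and "0 \<le> d"
  shows "d * (y * indicator {..t} x) - m * ((x - (t - d)) * indicator {t - d..t} x)
    \<le> y * max 0 (t - x)"
proof (cases "x \<le> t"; cases "x < t - d")
  assume "x \<le> t" "x < t - d"
  then have "y * d \<le> y * (t - x)"
    using assms by (intro mult_left_mono) auto
  then show ?thesis
    using \<open>x < t - d\<close> \<open>x \<le> t\<close> by (simp add: indicator_def mult.commute)
next
  assume "x \<le> t" "\<not> x < t - d"
  then have "0 \<le> (m - y) * (d - (t - x))"
    using assms by (intro mult_nonneg_nonneg) auto
  then show ?thesis
    using \<open>\<not> x < t - d\<close> \<open>x \<le> t\<close> by (simp add: indicator_def algebra_simps)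
qed (simp_all add: indicator_def)

locale symmetric_unimodal_density = prob_space M for M :: "'a measure" +
  fixes Z :: "'a \<Rightarrow> real" and f :: "real \<Rightarrow> real"
  assumes density_nonneg: "\<And>x. f x \<ge> 0"
    and distributed_Z: "distributed M lborel Z (\<lambda>x. ennreal (f x))"
    and density_symmetric: "\<And>x. f x = f (- x)"
    and density_antimono: "\<And>x y. 0 \<le> x \<Longrightarrow> x \<le> y \<Longrightarrow> f x \<ge> f y"
    and integrable_Z_square: "integrable M (\<lambda>\<omega>. (Z \<omega>)\<^sup>2)"
begin

lemma measurable_Z [measurable]: "Z \<in> borel_measurable M"
  using distributed_Z by (simp add: distributed_def)

lemma measurable_density [measurable]: "f \<in> borel_measurable borel"
proof -
  have "(\<lambda>x. ennreal (f x)) \<in> borel_measurable borel"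
    using distributed_Z by (simp add: distributed_def)
  then have "(\<lambda>x. enn2real (ennreal (f x))) \<in> borel_measurable borel"
    by simp
  then show ?thesis
    using density_nonneg by simp
qed

lemma density_abs: "f \<bar>x\<bar> = f x"
  by (cases "x \<ge> 0") (auto simp: density_symmetric[of x])

lemma density_le_of_abs_le: "\<bar>x\<bar> \<le> \<bar>y\<bar> \<Longrightarrow> f y \<le> f x"
  using density_antimono[of "\<bar>x\<bar>" "\<bar>y\<bar>"] by (simp add: density_abs)

lemma distributed_neg_Z: "distributed M lborel (\<lambda>\<omega>. - Z \<omega>) (\<lambda>x. ennreal (f x))"
proof -
  have "distributed M lborel (\<lambda>\<omega>. 0 + (- 1) * Z \<omega>)
      (\<lambda>x. ennreal (f ((x - 0) / (- 1))) / ennreal \<bar>- 1\<bar>)"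
    using distributed_affine[OF distributed_Z, of "- 1" 0] by simp
  moreover have "\<And>x::ennreal. x / 1 = x"
    by (simp add: divide_ennreal_def)
  ultimately show ?thesis
    by (simp add: density_symmetric[symmetric])
qed

lemma symmetric_unimodal_density_neg_Z: "symmetric_unimodal_density M (\<lambda>\<omega>. - Z \<omega>) f"
  by unfold_locales
    (use density_nonneg distributed_neg_Z density_symmetric density_antimono integrable_Z_square
      in simp_all)

lemma expectation_density:
  fixes g :: "real \<Rightarrow> real"
  assumes "g \<in> borel_measurable borel"
  shows "expectation (\<lambda>\<omega>. g (Z \<omega>)) = (\<integral>x. f x * g x \<partial>lborel)"
  using assms distributed_integral[OF distributed_Z, of g] density_nonneg by simp

lemma integrable_density_mult:
  fixes g :: "real \<Rightarrow> real"
  assumes "g \<in> borel_measurable borel" and "integrable M (\<lambda>\<omega>. g (Z \<omega>))"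
  shows "integrable lborel (\<lambda>x. f x * g x)"
  using assms distributed_integrable[OF distributed_Z, of g] density_nonneg by simp

lemma expectation_neg_Z:
  fixes g :: "real \<Rightarrow> real"
  assumes "g \<in> borel_measurable borel"
  shows "expectation (\<lambda>\<omega>. g (- Z \<omega>)) = expectation (\<lambda>\<omega>. g (Z \<omega>))"
  using assms distributed_integral[OF distributed_neg_Z, of g] distributed_integral[OF distributed_Z, of g]
    density_nonneg by simp

lemma integrable_Z: "integrable M Z"
  by (rule square_integrable_imp_integrable) (simp_all add: integrable_Z_square)

lemma expectation_Z: "expectation Z = 0"
  using expectation_neg_Z[of "\<lambda>x. x"] by simp

lemma integrable_of_quadratic_growth:
  assumes "g \<in> borel_measurable borel" and "\<And>x. \<bar>g x\<bar> \<le> A + B * \<bar>x\<bar> + C * x\<^sup>2"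
  shows "integrable M (\<lambda>\<omega>. g (Z \<omega>))"
  by (rule Bochner_Integration.integrable_bound[where f = "\<lambda>\<omega>. A + B * \<bar>Z \<omega>\<bar> + C * (Z \<omega>)\<^sup>2"])
    (use assms integrable_Z integrable_Z_square in \<open>auto intro!: order.trans[OF _ abs_ge_self]\<close>)

lemma integrable_indicator_Z [intro]:
  "A \<in> sets borel \<Longrightarrow> integrable M (\<lambda>\<omega>. indicator A (Z \<omega>) :: real)"
  by (rule integrable_of_quadratic_growth[where A = 1 and B = 0 and C = 0]) (auto simp: indicator_def)

lemma integrable_indicator_neg_Z [intro]:
  "A \<in> sets borel \<Longrightarrow> integrable M (\<lambda>\<omega>. indicator A (- Z \<omega>) :: real)"
  by (rule integrable_of_quadratic_growth[where g = "\<lambda>x. indicator A (- x)" and A = 1 and B = 0 and C = 0])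
    (auto simp: indicator_def)

lemma integrable_ramp_Z [intro]: "integrable M (\<lambda>\<omega>. max 0 (t - Z \<omega>))"
  by (rule integrable_of_quadratic_growth[where A = "\<bar>t\<bar>" and B = 1 and C = 0]) auto

lemma integrable_ramp_square_Z [intro]: "integrable M (\<lambda>\<omega>. (max 0 (t - Z \<omega>))\<^sup>2)"
proof (rule integrable_of_quadratic_growth[where A = "2 * t\<^sup>2" and B = 0 and C = 2])
  fix x
  have "(max 0 (t - x))\<^sup>2 \<le> (t - x)\<^sup>2"
    by (simp add: max_def power2_eq_square)
  also have "\<dots> \<le> 2 * t\<^sup>2 + 2 * x\<^sup>2"
    using zero_le_power2[of "t + x"] by (simp add: power2_diff power2_sum)
  finally show "\<bar>(max 0 (t - x))\<^sup>2\<bar> \<le> 2 * t\<^sup>2 + 0 * \<bar>x\<bar> + 2 * x\<^sup>2"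
    by simp
qed simp

definition cdf_Z :: "real \<Rightarrow> real" where
  "cdf_Z t = expectation (\<lambda>\<omega>. indicator {..t} (Z \<omega>))"

definition lpm1 :: "real \<Rightarrow> real" where
  "lpm1 t = expectation (\<lambda>\<omega>. max 0 (t - Z \<omega>))"

definition lpm2 :: "real \<Rightarrow> real" where
  "lpm2 t = expectation (\<lambda>\<omega>. (max 0 (t - Z \<omega>))\<^sup>2)"

lemma cdf_Z_nonneg: "0 \<le> cdf_Z t"
  unfolding cdf_Z_def by (rule integral_nonneg_AE) auto

lemma lpm1_nonneg: "0 \<le> lpm1 t"
  unfolding lpm1_def by (rule integral_nonneg_AE) auto

lemma prob_interval_le:
  assumes "a \<le> b"
  shows "expectation (\<lambda>\<omega>. indicator {a..b} (Z \<omega>)) \<le> f 0 * (b - a)"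
proof -
  have "expectation (\<lambda>\<omega>. indicator {a..b} (Z \<omega>)) = (\<integral>x. f x * indicator {a..b} x \<partial>lborel)"
    by (rule expectation_density) simp
  also have "\<dots> \<le> (\<integral>x. f 0 * indicator {a..b} x \<partial>lborel)"
    by (intro integral_mono integrable_density_mult integrable_indicator_Z integrable_mult_right
        integrable_real_indicator)
      (use assms in \<open>auto simp: indicator_def density_le_of_abs_le\<close>)
  also have "\<dots> = f 0 * (b - a)"
    using assms by simp
  finally show ?thesis .
qed

lemma prob_open_interval_ge:
  assumes "a \<le> b" and "\<And>x. a < x \<Longrightarrow> x < b \<Longrightarrow> c \<le> f x"
  shows "c * (b - a) \<le> expectation (\<lambda>\<omega>. indicator {a<..<b} (Z \<omega>))"
proof -
  have "c * (b - a) = (\<integral>x. c * indicator {a<..<b} x \<partial>lborel)"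
    using assms by simp
  also have "\<dots> \<le> (\<integral>x. f x * indicator {a<..<b} x \<partial>lborel)"
    by (intro integral_mono integrable_density_mult integrable_indicator_Z integrable_mult_right
        integrable_real_indicator)
      (auto simp: indicator_def assms)
  also have "\<dots> = expectation (\<lambda>\<omega>. indicator {a<..<b} (Z \<omega>))"
    by (rule expectation_density[symmetric]) simp
  finally show ?thesis .
qed

lemma cdf_Z_increment_ge:
  assumes "s \<le> t" and "\<And>x. s < x \<Longrightarrow> x < t \<Longrightarrow> c \<le> f x"
  shows "c * (t - s) \<le> cdf_Z t - cdf_Z s"
proof -
  have "c * (t - s) \<le> expectation (\<lambda>\<omega>. indicator {s<..<t} (Z \<omega>))"
    by (rule prob_open_interval_ge[OF assms])
  also have "\<dots> \<le> expectation (\<lambda>\<omega>. indicator {s<..t} (Z \<omega>))"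
    by (intro integral_mono integrable_indicator_Z) (auto simp: indicator_def)
  also have "\<dots> = expectation (\<lambda>\<omega>. indicator {..t} (Z \<omega>) - indicator {..s} (Z \<omega>))"
    using assms(1) by (intro Bochner_Integration.integral_cong) (auto simp: indicator_def)
  also have "\<dots> = cdf_Z t - cdf_Z s"
    unfolding cdf_Z_def by (rule Bochner_Integration.integral_diff) auto
  finally show ?thesis .
qed

lemma cdf_Z_mono: "s \<le> t \<Longrightarrow> cdf_Z s \<le> cdf_Z t"
  using cdf_Z_increment_ge[of s t 0] density_nonneg by simp

lemma cdf_Z_zero: "cdf_Z 0 = 1 / 2"
proof -
  have "cdf_Z 0 + cdf_Z 0
      = expectation (\<lambda>\<omega>. indicator {..0} (Z \<omega>) + indicator {..0} (- Z \<omega>) :: real)"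
    using expectation_neg_Z[of "\<lambda>x. indicator {..0} (- x)"]
    unfolding cdf_Z_def by (subst Bochner_Integration.integral_add) auto
  also have "\<dots> = expectation (\<lambda>\<omega>. 1 + indicator {0..0} (Z \<omega>) :: real)"
    by (intro Bochner_Integration.integral_cong) (auto simp: indicator_def)
  also have "\<dots> = 1 + expectation (\<lambda>\<omega>. indicator {0..0} (Z \<omega>) :: real)"
    by (subst Bochner_Integration.integral_add) (auto simp: prob_space)
  also have "expectation (\<lambda>\<omega>. indicator {0..0} (Z \<omega>) :: real) = 0"
    using prob_interval_le[of 0 0] by (intro antisym) (auto intro!: integral_nonneg_AE)
  finally show ?thesis
    by simp
qed

lemma one_minus_two_cdf_Z:
  assumes "t < 0"
  shows "1 - 2 * cdf_Z t = expectation (\<lambda>\<omega>. indicator {t<..<- t} (Z \<omega>))"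
proof -
  have "cdf_Z t + expectation (\<lambda>\<omega>. indicator {t<..<- t} (Z \<omega>))
      + expectation (\<lambda>\<omega>. indicator {..t} (- Z \<omega>))
      = expectation (\<lambda>\<omega>. indicator {..t} (Z \<omega>) + indicator {t<..<- t} (Z \<omega>)
          + indicator {..t} (- Z \<omega>) :: real)"
    unfolding cdf_Z_def
    by (simp add: integrable_indicator_Z integrable_indicator_neg_Z)
  also have "\<dots> = expectation (\<lambda>\<omega>. 1)"
    using assms by (intro Bochner_Integration.integral_cong) (auto simp: indicator_def)
  finally have "cdf_Z t + expectation (\<lambda>\<omega>. indicator {t<..<- t} (Z \<omega>))
      + expectation (\<lambda>\<omega>. indicator {..t} (- Z \<omega>)) = 1"
    by (simp add: prob_space)
  moreover have "expectation (\<lambda>\<omega>. indicator {..t} (- Z \<omega>)) = cdf_Z t"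
    unfolding cdf_Z_def by (rule expectation_neg_Z) simp
  ultimately show ?thesis
    by simp
qed

lemma cdf_Z_central_bound:
  assumes "t < 0"
  shows "- 2 * t * f t \<le> 1 - 2 * cdf_Z t"
proof -
  have "f t * (- t - t) \<le> expectation (\<lambda>\<omega>. indicator {t<..<- t} (Z \<omega>))"
    using assms by (intro prob_open_interval_ge density_le_of_abs_le) auto
  then show ?thesis
    using one_minus_two_cdf_Z[OF assms] by (simp add: algebra_simps)
qed

(* Given the mass cdf_Z t below t and the bound f \<le> f t there, lpm1 t is smallest when that mass
   sits uniformly with density f t on [t - cdf_Z t / f t, t]. *)
lemma cdf_Z_square_le:
  assumes "t \<le> 0"
  shows "(cdf_Z t)\<^sup>2 \<le> 2 * f t * lpm1 t"
proof -
  have cdf_lborel: "cdf_Z t = (\<integral>x. f x * indicator {..t} x \<partial>lborel)"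
    unfolding cdf_Z_def by (rule expectation_density) simp
  have lpm1_lborel: "lpm1 t = (\<integral>x. f x * max 0 (t - x) \<partial>lborel)"
    unfolding lpm1_def by (rule expectation_density) simp
  have below_t: "x \<le> t \<Longrightarrow> f x \<le> f t" for x
    using assms by (intro density_le_of_abs_le) auto
  show ?thesis
  proof (cases "f t = 0")
    case True
    then have vanish: "f x * indicator {..t} x = 0" for x
      using below_t[of x] density_nonneg[of x] by (auto simp: indicator_def)
    have "cdf_Z t = 0"
      by (simp only: cdf_lborel vanish) simp
    with True show ?thesis
      by simp
  next
    case False
    define m where "m = f t"
    define d where "d = cdf_Z t / m"
    have m: "0 < m"
      using False density_nonneg[of t] by (simp add: m_def)
    have d: "0 \<le> d"
      using m cdf_Z_nonneg[of t] by (simp add: d_def)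
    have integrable_below: "integrable lborel (\<lambda>x. f x * indicator {..t} x)"
      by (rule integrable_density_mult) auto
    have "d * cdf_Z t - m * (d\<^sup>2 / 2)
        = (\<integral>x. d * (f x * indicator {..t} x) - m * ((x - (t - d)) * indicator {t - d..t} x) \<partial>lborel)"
      using d integrable_below
      by (simp add: cdf_lborel integral_lborel_ramp integrable_lborel_ramp)
    also have "\<dots> \<le> lpm1 t"
      unfolding lpm1_lborel
      using m cdf_Z_nonneg[of t]
      by (intro integral_mono bathtub_ramp_bound Bochner_Integration.integrable_diff
          integrable_mult_right integrable_density_mult integrable_lborel_ramp integrable_indicator_Z
          integrable_ramp_Z density_nonneg)
        (auto simp: d_def m_def below_t)
    finally show ?thesis
      using m by (simp add: d_def m_def power2_eq_square field_simps)
  qed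
qed

lemma lpm1_increment_bound: "\<bar>lpm1 (t + h) - lpm1 t - h * cdf_Z t\<bar> \<le> 2 * f 0 * h\<^sup>2"
proof -
  let ?g = "\<lambda>\<omega>. max 0 (t + h - Z \<omega>) - max 0 (t - Z \<omega>) - h * indicator {..t} (Z \<omega>)"
  have "lpm1 (t + h) - lpm1 t - h * cdf_Z t = expectation ?g"
    unfolding lpm1_def cdf_Z_def by (simp add: integrable_ramp_Z integrable_indicator_Z)
  then have "\<bar>lpm1 (t + h) - lpm1 t - h * cdf_Z t\<bar> \<le> expectation (\<lambda>\<omega>. \<bar>?g \<omega>\<bar>)"
    using integral_norm_bound[of M ?g] by simp
  also have "\<dots> \<le> expectation (\<lambda>\<omega>. \<bar>h\<bar> * indicator {t - \<bar>h\<bar>..t + \<bar>h\<bar>} (Z \<omega>))"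
    by (intro integral_mono max0_increment_bound integrable_mult_right integrable_indicator_Z
        Bochner_Integration.integrable_abs Bochner_Integration.integrable_diff integrable_ramp_Z) auto
  also have "\<dots> \<le> \<bar>h\<bar> * (f 0 * (t + \<bar>h\<bar> - (t - \<bar>h\<bar>)))"
    by (simp only: integral_mult_right_zero) (intro mult_left_mono prob_interval_le; simp)
  also have "\<dots> = 2 * f 0 * h\<^sup>2"
    by (simp add: power2_eq_square algebra_simps)
  finally show ?thesis .
qed

lemma lpm2_increment_bound: "\<bar>lpm2 (t + h) - lpm2 t - h * (2 * lpm1 t)\<bar> \<le> h\<^sup>2"
proof -
  let ?g = "\<lambda>\<omega>. (max 0 (t + h - Z \<omega>))\<^sup>2 - (max 0 (t - Z \<omega>))\<^sup>2 - 2 * h * max 0 (t - Z \<omega>)"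
  have "lpm2 (t + h) - lpm2 t - h * (2 * lpm1 t) = expectation ?g"
    unfolding lpm2_def lpm1_def
    by (simp add: integrable_ramp_Z integrable_ramp_square_Z)
  then have "\<bar>lpm2 (t + h) - lpm2 t - h * (2 * lpm1 t)\<bar> \<le> expectation (\<lambda>\<omega>. \<bar>?g \<omega>\<bar>)"
    using integral_norm_bound[of M ?g] by simp
  also have "\<dots> \<le> expectation (\<lambda>\<omega>. h\<^sup>2)"
    using max0_square_increment_bound[of "t - Z _" h]
    by (intro integral_mono Bochner_Integration.integrable_abs Bochner_Integration.integrable_diff
        integrable_ramp_Z integrable_ramp_square_Z integrable_mult_right) (auto simp: algebra_simps)
  finally show ?thesis
    by (simp add: prob_space)
qed

lemma has_real_derivative_lpm1: "(lpm1 has_real_derivative cdf_Z t) (at t)"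
  by (rule has_real_derivative_quadratic_remainder[OF lpm1_increment_bound])

lemma has_real_derivative_lpm2: "(lpm2 has_real_derivative 2 * lpm1 t) (at t)"
  by (rule has_real_derivative_quadratic_remainder[where B = 1]) (simp add: lpm2_increment_bound)

lemma integrable_loss: "integrable M (\<lambda>\<omega>. lossL k1 k2 (Z \<omega> + c))"
  using integrable_Z integrable_ramp_Z[of "- c"] by (simp add: lossL_eq_ramp algebra_simps)

lemma expectation_loss:
  "expectation (\<lambda>\<omega>. lossL k1 k2 (Z \<omega> + c)) = k1 * c + (k1 + k2) * lpm1 (- c)"
  using integrable_Z integrable_ramp_Z[of "- c"] expectation_Z
  by (simp add: lossL_eq_ramp lpm1_def algebra_simps prob_space)

lemma integrable_loss_square: "integrable M (\<lambda>\<omega>. (lossL k1 k2 (Z \<omega> + c))\<^sup>2)"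
  using integrable_Z integrable_ramp_square_Z[of "- c"] integrable_Z_square
  by (simp add: lossL_shift_square)

lemma expectation_loss_square:
  "expectation (\<lambda>\<omega>. (lossL k1 k2 (Z \<omega> + c))\<^sup>2) = k1\<^sup>2 * expectation (\<lambda>\<omega>. (Z \<omega>)\<^sup>2) + k1\<^sup>2 * c\<^sup>2
    + ((k1 + k2)\<^sup>2 - 2 * k1 * (k1 + k2)) * lpm2 (- c)"
  using integrable_Z integrable_ramp_square_Z[of "- c"] integrable_Z_square expectation_Z
  by (simp add: lossL_shift_square lpm2_def prob_space)

definition psi :: "real \<Rightarrow> real \<Rightarrow> real \<Rightarrow> real" where
  "psi k1 k2 t = ((k1 + k2)\<^sup>2 - 2 * k1 * (k1 + k2)) * lpm2 t - (k1 + k2)\<^sup>2 * (lpm1 t)\<^sup>2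
    + 2 * k1 * (k1 + k2) * t * lpm1 t"

definition psi' :: "real \<Rightarrow> real \<Rightarrow> real \<Rightarrow> real" where
  "psi' k1 k2 t = 2 * (k1 + k2) * ((k1 + k2) * ((1 - 2 * cdf_Z t) * lpm1 t + (cdf_Z t)\<^sup>2 * t)
    + ((k1 + k2) * cdf_Z t - k1) * (lpm1 t - t * cdf_Z t))"

lemma variance_loss:
  "variance (\<lambda>\<omega>. lossL k1 k2 (Z \<omega> + c)) = k1\<^sup>2 * expectation (\<lambda>\<omega>. (Z \<omega>)\<^sup>2) + psi k1 k2 (- c)"
  by (subst variance_eq[OF integrable_loss integrable_loss_square])
    (simp only: expectation_loss expectation_loss_square psi_def; simp add: power2_eq_square algebra_simps)

lemma has_real_derivative_psi: "(psi k1 k2 has_real_derivative psi' k1 k2 t) (at t)"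
proof -
  have "(psi k1 k2 has_real_derivative
      ((k1 + k2)\<^sup>2 - 2 * k1 * (k1 + k2)) * (2 * lpm1 t)
      - (k1 + k2)\<^sup>2 * (2 * lpm1 t * cdf_Z t)
      + 2 * k1 * (k1 + k2) * (lpm1 t + t * cdf_Z t)) (at t)"
    unfolding psi_def[abs_def]
    by (auto intro!: derivative_eq_intros has_real_derivative_lpm1 has_real_derivative_lpm2
        simp: algebra_simps)
  then show ?thesis
    by (rule DERIV_cong) (simp add: psi'_def power2_eq_square algebra_simps)
qed

lemma psi'_pos:
  assumes "0 < k1" "0 < k2" "z < 0" and above: "k1 / (k1 + k2) < cdf_Z z"
  shows "0 < psi' k1 k2 z"
proof -
  define F P where "F = cdf_Z z" and "P = lpm1 z"
  have "0 < F"
    using assms by (simp add: F_def order.strict_trans1[OF _ above])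
  have square: "F\<^sup>2 \<le> 2 * f z * P"
    using cdf_Z_square_le[of z] assms by (simp add: F_def P_def)
  have tail: "- 2 * z * f z \<le> 1 - 2 * F"
    using cdf_Z_central_bound[of z] assms by (simp add: F_def)
  have "P \<noteq> 0"
    using square \<open>0 < F\<close> by auto
  then have "0 < P"
    using lpm1_nonneg[of z] by (simp add: P_def)
  have "- z * F\<^sup>2 \<le> - z * (2 * f z * P)"
    using square assms by (intro mult_left_mono) auto
  moreover have "(- 2 * z * f z) * P \<le> (1 - 2 * F) * P"
    using tail \<open>0 < P\<close> by (intro mult_right_mono) auto
  ultimately have unimodal_term: "0 \<le> (1 - 2 * F) * P + F\<^sup>2 * z"
    by (simp add: algebra_simps)
  have "z * F < 0"
    using assms \<open>0 < F\<close> by (simp add: mult_neg_pos)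
  then have slope_term: "0 < ((k1 + k2) * F - k1) * (P - z * F)"
    using above assms \<open>0 < P\<close> by (intro mult_pos_pos) (auto simp: F_def field_simps)
  have "0 < (k1 + k2) * ((1 - 2 * F) * P + F\<^sup>2 * z) + ((k1 + k2) * F - k1) * (P - z * F)"
    using unimodal_term slope_term assms by (intro add_nonneg_pos mult_nonneg_nonneg) auto
  then show ?thesis
    using assms by (simp add: psi'_def F_def[symmetric] P_def[symmetric])
qed

lemma cdf_Z_at_minimizer:
  assumes "0 < k1" "0 < k2"
    and minimizer: "\<And>c. expectation (\<lambda>\<omega>. lossL k1 k2 (Z \<omega> + C))
      \<le> expectation (\<lambda>\<omega>. lossL k1 k2 (Z \<omega> + c))"
  shows "cdf_Z (- C) = k1 / (k1 + k2)"
proof -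
  define risk where "risk c = k1 * c + (k1 + k2) * lpm1 (- c)" for c
  have "((\<lambda>c. - c) has_real_derivative - 1) (at C)"
    by (rule derivative_eq_intros) auto
  then have deriv: "(risk has_real_derivative k1 - (k1 + k2) * cdf_Z (- C)) (at C)"
    unfolding risk_def[abs_def]
    by (auto intro!: derivative_eq_intros DERIV_chain2[OF has_real_derivative_lpm1])
  have "\<forall>c. \<bar>C - c\<bar> < 1 \<longrightarrow> risk C \<le> risk c"
    using minimizer by (simp add: risk_def expectation_loss)
  then have "k1 - (k1 + k2) * cdf_Z (- C) = 0"
    by (rule DERIV_local_min[OF deriv zero_less_one])
  then show ?thesis
    using assms by (simp add: field_simps)
qed

lemma minimizer_nonpos_of_equal_weights:
  assumes "0 < k"
    and minimizer: "\<And>c. expectation (\<lambda>\<omega>. lossL k k (Z \<omega> + C))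
      \<le> expectation (\<lambda>\<omega>. lossL k k (Z \<omega> + c))"
  shows "C \<le> 0"
proof (rule ccontr)
  assume "\<not> C \<le> 0"
  have half: "cdf_Z (- C) = 1 / 2"
    using cdf_Z_at_minimizer[OF assms(1) assms(1) minimizer] assms by simp
  then have "C * f (- C) \<le> 0"
    using cdf_Z_central_bound[of "- C"] \<open>\<not> C \<le> 0\<close> by simp
  then have "f (- C) = 0"
    using \<open>\<not> C \<le> 0\<close> density_nonneg[of "- C"] by (simp add: mult_le_0_iff)
  then show False
    using cdf_Z_square_le[of "- C"] \<open>\<not> C \<le> 0\<close> half by simp
qed

lemma variance_decreases_at_minimizer:
  assumes "0 < k1" "k1 < k2"
    and minimizer: "\<And>c. expectation (\<lambda>\<omega>. lossL k1 k2 (Z \<omega> + C))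
      \<le> expectation (\<lambda>\<omega>. lossL k1 k2 (Z \<omega> + c))"
  shows "0 < C \<and> variance (\<lambda>\<omega>. lossL k1 k2 (Z \<omega> + C)) < variance (\<lambda>\<omega>. lossL k1 k2 (Z \<omega>))"
proof -
  define \<alpha> where "\<alpha> = k1 / (k1 + k2)"
  have "0 < \<alpha>" "\<alpha> < 1 / 2"
    using assms by (simp_all add: \<alpha>_def field_simps)
  have at_C: "cdf_Z (- C) = \<alpha>"
    using cdf_Z_at_minimizer[OF _ _ minimizer] assms by (simp add: \<alpha>_def)
  have "0 < C"
    using cdf_Z_mono[of 0 "- C"] cdf_Z_zero at_C \<open>\<alpha> < 1 / 2\<close> by (cases "0 < C") auto
  have "0 < f (- C)"
    using cdf_Z_square_le[of "- C"] \<open>0 < C\<close> at_C \<open>0 < \<alpha>\<close> density_nonneg[of "- C"]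
    by (cases "f (- C) = 0") auto
  obtain z where z: "- C < z" "z < 0"
    and mvt: "psi k1 k2 0 - psi k1 k2 (- C) = (0 - - C) * psi' k1 k2 z"
    using MVT2[of "- C" 0 "psi k1 k2" "psi' k1 k2"] \<open>0 < C\<close> has_real_derivative_psi by auto
  have "0 < f (- C) * (z - - C)"
    using \<open>0 < f (- C)\<close> z by simp
  also have "\<dots> \<le> cdf_Z z - cdf_Z (- C)"
    using z by (intro cdf_Z_increment_ge density_le_of_abs_le) auto
  finally have "0 < psi' k1 k2 z"
    using psi'_pos[of k1 k2 z] assms z at_C by (simp add: \<alpha>_def)
  then have "psi k1 k2 (- C) < psi k1 k2 0"
    using mvt \<open>0 < C\<close> by (simp add: algebra_simps)
  then show ?thesis
    using \<open>0 < C\<close> variance_loss[of k1 k2 C] variance_loss[of k1 k2 0] by simp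
qed

lemma reflected_minimizer:
  assumes "\<And>c. expectation (\<lambda>\<omega>. lossL k1 k2 (Z \<omega> + C))
      \<le> expectation (\<lambda>\<omega>. lossL k1 k2 (Z \<omega> + c))"
  shows "expectation (\<lambda>\<omega>. lossL k2 k1 (- Z \<omega> + - C))
      \<le> expectation (\<lambda>\<omega>. lossL k2 k1 (- Z \<omega> + c))"
proof -
  have "expectation (\<lambda>\<omega>. lossL k2 k1 (- Z \<omega> + - C))
      \<le> expectation (\<lambda>\<omega>. lossL k2 k1 (- Z \<omega> + - (- c)))"
    unfolding minus_add_distrib[symmetric] lossL_reflect by (rule assms)
  then show ?thesis
    by simp
qed

lemma minimizer_eq_0_of_equal_weights:
  assumes "0 < k"
    and minimizer: "\<And>c. expectation (\<lambda>\<omega>. lossL k k (Z \<omega> + C))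
      \<le> expectation (\<lambda>\<omega>. lossL k k (Z \<omega> + c))"
  shows "C = 0"
proof -
  interpret reflected: symmetric_unimodal_density M "\<lambda>\<omega>. - Z \<omega>" f
    by (rule symmetric_unimodal_density_neg_Z)
  show ?thesis
    using reflected.minimizer_nonpos_of_equal_weights[OF assms(1) reflected_minimizer[OF minimizer]]
      minimizer_nonpos_of_equal_weights[OF assms] by simp
qed

lemma variance_decreases_at_minimizer_reflected:
  assumes "0 < k2" "k2 < k1"
    and minimizer: "\<And>c. expectation (\<lambda>\<omega>. lossL k1 k2 (Z \<omega> + C))
      \<le> expectation (\<lambda>\<omega>. lossL k1 k2 (Z \<omega> + c))"
  shows "C < 0 \<and> variance (\<lambda>\<omega>. lossL k1 k2 (Z \<omega> + C)) < variance (\<lambda>\<omega>. lossL k1 k2 (Z \<omega>))"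
proof -
  interpret reflected: symmetric_unimodal_density M "\<lambda>\<omega>. - Z \<omega>" f
    by (rule symmetric_unimodal_density_neg_Z)
  show ?thesis
    using reflected.variance_decreases_at_minimizer[OF assms(1,2) reflected_minimizer[OF minimizer]]
    unfolding minus_add_distrib[symmetric] lossL_reflect by simp
qed

end

theorem theorem1:
  fixes M :: "'a measure" and Z :: "'a \<Rightarrow> real" and f :: "real \<Rightarrow> real"
    and k1 k2 C :: real
  assumes "prob_space M"
    and "k1 > 0" and "k2 > 0"
    and "\<And>x. f x \<ge> 0"
    and "distributed M lborel Z (\<lambda>x. ennreal (f x))"
    and "\<And>x. f x = f (- x)"
    and "\<And>x y. 0 \<le> x \<Longrightarrow> x \<le> y \<Longrightarrow> f x \<ge> f y"
    and "integrable M (\<lambda>\<omega>. (Z \<omega>)\<^sup>2)"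
    and "\<And>c. (\<integral>\<omega>. lossL k1 k2 (Z \<omega> + C) \<partial>M) \<le> (\<integral>\<omega>. lossL k1 k2 (Z \<omega> + c) \<partial>M)"
  shows "prob_space.variance M (\<lambda>\<omega>. lossL k1 k2 (Z \<omega> + C))
           \<le> prob_space.variance M (\<lambda>\<omega>. lossL k1 k2 (Z \<omega>))
       \<and> (prob_space.variance M (\<lambda>\<omega>. lossL k1 k2 (Z \<omega> + C))
           = prob_space.variance M (\<lambda>\<omega>. lossL k1 k2 (Z \<omega>)) \<longrightarrow> C = 0)
       \<and> (C = 0 \<longleftrightarrow> k1 = k2)"
proof -
  interpret symmetric_unimodal_density M Z f
    using assms(1,4-8) by (intro symmetric_unimodal_density.intro symmetric_unimodal_density_axioms.intro)
  consider "k1 < k2" | "k1 = k2" | "k2 < k1"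
    by linarith
  then show ?thesis
  proof cases
    case 1
    then show ?thesis
      using variance_decreases_at_minimizer[OF assms(2) 1 assms(9)] by auto
  next
    case 2
    from assms(9) have "C = 0"
      unfolding 2[symmetric] by (rule minimizer_eq_0_of_equal_weights[OF assms(2)])
    with 2 show ?thesis
      by simp
  next
    case 3
    then show ?thesis
      using variance_decreases_at_minimizer_reflected[OF assms(3) 3 assms(9)] by auto
  qed
qed

end
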